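(* Let $A,B\subset\mathbb{R}^n$ be set-germs at $0$ with $0\in\overline{A}\cap\overline{B}$, and let $h:(\mathbb{R}^n,0)\to(\mathbb{R}^n,0)$ be a bi-Lipschitz homeomorphism germ. Suppose that $A$ or $B$ satisfies condition (SSP), and that $h(A)$ or $h(B)$ satisfies condition (SSP). Then $A$ and $B$ are weakly transverse at $0$ if and only if $h(A)$ and $h(B)$ are weakly transverse at $0$.
   Context: For a set-germ $A\subset\mathbb{R}^n$ at $0$ with $0\in\overline A$, the direction set is $D(A)=\{a\in S^{n-1}:\exists\, x_i\in A\setminus\{0\},\ x_i\to0,\ x_i/\|x_i\|\to a\}$, where $S^{n-1}$ is the unit sphere. For sequences, $\|u_m\|\ll\|v_m\|,\|w_m\|$ means $\|u_m\|/\|v_m\|\to0$ and $\|u_m\|/\|w_m\|\to0$. A set-germ $A$ with $0\in\overline A$ satisfies condition (SSP) if for every sequence $a_m\in\mathbb{R}^n$ tending to $0$ with $\lim a_m/\|a_m\|\in D(A)$ there is a sequence $b_m\in A$ with $\|a_m-b_m\|\ll\|a_m\|,\|b_m\|$. $A$ and $B$ are weakly transverse at $0$ if $D(A)\cap D(B)=\emptyset$. A bi-Lipschitz homeomorphism germ $h$ is a homeomorphism germ with $h(0)=0$ and constants $0<K_1\le K_2$ with $K_1\|x-y\|\le\|h(x)-h(y)\|\le K_2\|x-y\|$ near $0$. *)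

theory Defs
  imports "HOL-Analysis.Analysis"
begin

definition dirset :: "'a::euclidean_space set \<Rightarrow> 'a set" where
  "dirset A = {a \<in> sphere 0 1. \<exists>x :: nat \<Rightarrow> 'a.
      (\<forall>i. x i \<in> A - {0}) \<and> x \<longlonglongrightarrow> 0 \<and> (\<lambda>i. x i /\<^sub>R norm (x i)) \<longlonglongrightarrow> a}"

definition SSP :: "'a::euclidean_space set \<Rightarrow> bool" where
  "SSP A \<longleftrightarrow> (\<forall>a :: nat \<Rightarrow> 'a. \<forall>d.
      a \<longlonglongrightarrow> 0 \<and> (\<lambda>m. a m /\<^sub>R norm (a m)) \<longlonglongrightarrow> d \<and> d \<in> dirset A \<longrightarrow>
      (\<exists>b :: nat \<Rightarrow> 'a. (\<forall>m. b m \<in> A) \<and>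
          (\<lambda>m. norm (a m - b m) / norm (a m)) \<longlonglongrightarrow> 0 \<and>
          (\<lambda>m. norm (a m - b m) / norm (b m)) \<longlonglongrightarrow> 0))"

definition weakly_transverse :: "'a::euclidean_space set \<Rightarrow> 'a set \<Rightarrow> bool" where
  "weakly_transverse A B \<longleftrightarrow> dirset A \<inter> dirset B = {}"

text \<open>h, restricted to the open neighbourhood U of 0, is a representative of a
  bi-Lipschitz homeomorphism germ (R^n,0) -> (R^n,0).\<close>
definition bilipschitz_homeo_germ :: "('a::euclidean_space \<Rightarrow> 'a) \<Rightarrow> 'a set \<Rightarrow> bool" where
  "bilipschitz_homeo_germ h U \<longleftrightarrow>
     open U \<and> 0 \<in> U \<and> h 0 = 0 \<and> open (h ` U) \<and>
     (\<exists>g. homeomorphism U (h ` U) h g) \<and>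
     (\<exists>K1 K2. 0 < K1 \<and> K1 \<le> K2 \<and>
        (\<forall>x\<in>U. \<forall>y\<in>U. K1 * dist x y \<le> dist (h x) (h y) \<and> dist (h x) (h y) \<le> K2 * dist x y))"

end

theory Submission imports Defs begin

text \<open>If two sets share a direction \<open>d\<close> and one of them, say \<open>A\<close>, satisfies (SSP), then a
  sequence of \<open>B\<close> tending to \<open>0\<close> in direction \<open>d\<close> is shadowed by a sequence of \<open>A\<close> whose
  distance to it is small relative to its norm. A bi-Lipschitz map \<open>f\<close> with \<open>f 0 = 0\<close>
  preserves this relative closeness, so the two image sequences have the same limit
  directions; by compactness of the sphere some subsequence has one, and it is a common
  direction of the images. Applied to \<open>h\<close> and to its inverse (again bi-Lipschitz near \<open>0\<close>),
  this gives both implications.\<close>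

lemma norm_unit_diff_le:
  fixes p q :: "'a::real_normed_vector"
  assumes "p \<noteq> 0" "q \<noteq> 0"
  shows "norm (p /\<^sub>R norm p - q /\<^sub>R norm q) \<le> 2 * norm (p - q) / norm p"
proof -
  define c where "c = (norm q - norm p) / (norm p * norm q)"
  have decomp: "p /\<^sub>R norm p - q /\<^sub>R norm q = (p - q) /\<^sub>R norm p + c *\<^sub>R q"
  proof -
    have "c = inverse (norm p) - inverse (norm q)"
      using assms by (simp add: c_def field_simps)
    thus ?thesis by (simp add: scaleR_diff_left scaleR_diff_right)
  qed
  have "norm (c *\<^sub>R q) = \<bar>norm q - norm p\<bar> / norm p"
    using assms by (simp add: c_def abs_mult)
  also have "\<dots> \<le> norm (p - q) / norm p"
    using norm_triangle_ineq3[of q p] by (simp add: norm_minus_commute divide_right_mono)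
  finally have "norm (c *\<^sub>R q) \<le> norm (p - q) / norm p" .
  moreover have "norm ((p - q) /\<^sub>R norm p) = norm (p - q) / norm p"
    by (simp add: divide_inverse_commute)
  ultimately show ?thesis
    unfolding decomp using norm_triangle_ineq[of "(p - q) /\<^sub>R norm p" "c *\<^sub>R q"] by linarith
qed

lemma dirset_mono: "A \<subseteq> B \<Longrightarrow> dirset A \<subseteq> dirset B"
  unfolding dirset_def by blast

lemma weakly_transverse_subset:
  "weakly_transverse A B \<Longrightarrow> A' \<subseteq> A \<Longrightarrow> B' \<subseteq> B \<Longrightarrow> weakly_transverse A' B'"
  using dirset_mono unfolding weakly_transverse_def by blast

lemma dirsetI_eventually:
  assumes "eventually (\<lambda>i. z i \<in> S - {0}) sequentially" "z \<longlonglongrightarrow> 0"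
    and "(\<lambda>i. z i /\<^sub>R norm (z i)) \<longlonglongrightarrow> a" "a \<in> sphere 0 1"
  shows "a \<in> dirset S"
proof -
  obtain N where N: "\<And>i. i \<ge> N \<Longrightarrow> z i \<in> S - {0}"
    using assms(1) unfolding eventually_sequentially by blast
  have "(\<lambda>i. z (i + N)) \<longlonglongrightarrow> 0" "(\<lambda>i. z (i + N) /\<^sub>R norm (z (i + N))) \<longlonglongrightarrow> a"
    using LIMSEQ_ignore_initial_segment assms(2,3) by blast+
  moreover have "\<forall>i. z (i + N) \<in> S - {0}" using N by simp
  ultimately show ?thesis
    using assms(4) unfolding dirset_def mem_Collect_eq by (intro conjI exI[of _ "\<lambda>i. z (i + N)"]) auto
qed

lemma relatively_close_tendsto_zero:
  fixes x b :: "nat \<Rightarrow> 'a::real_normed_vector"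
  assumes "x \<longlonglongrightarrow> 0" "\<And>m. x m \<noteq> 0" "(\<lambda>m. norm (x m - b m) / norm (x m)) \<longlonglongrightarrow> 0"
  shows "b \<longlonglongrightarrow> 0" and "eventually (\<lambda>m. b m \<noteq> 0) sequentially"
proof -
  define \<rho> where "\<rho> m = norm (x m - b m) / norm (x m)" for m
  have \<rho>: "\<rho> \<longlonglongrightarrow> 0" using assms(3) by (simp add: \<rho>_def[abs_def])
  have dist_eq: "norm (x m - b m) = \<rho> m * norm (x m)" for m
    using assms(2)[of m] by (simp add: \<rho>_def)
  show "b \<longlonglongrightarrow> 0"
  proof (rule Lim_null_comparison)
    have "norm (b m) \<le> norm (x m) + \<rho> m * norm (x m)" for m
      using norm_triangle_sub[of "b m" "x m"] norm_minus_commute[of "b m" "x m"] dist_eq[of m] by linarith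
    then show "\<forall>\<^sub>F m in sequentially. norm (b m) \<le> norm (x m) + \<rho> m * norm (x m)"
      by simp
    show "(\<lambda>m. norm (x m) + \<rho> m * norm (x m)) \<longlonglongrightarrow> 0"
      using tendsto_add[OF _ tendsto_mult[OF \<rho>]] tendsto_norm_zero[OF assms(1)] by force
  qed
  show "eventually (\<lambda>m. b m \<noteq> 0) sequentially"
  proof -
    have "eventually (\<lambda>m. \<rho> m < 1) sequentially"
      using order_tendstoD(2)[OF \<rho>] by simp
    then show ?thesis
      by eventually_elim (use assms(2) in \<open>auto simp: \<rho>_def\<close>)
  qed
qed

lemma SSP_relatively_close:
  assumes "SSP A" "d \<in> dirset A" "x \<longlonglongrightarrow> 0" "\<And>m. x m \<noteq> 0" "(\<lambda>m. x m /\<^sub>R norm (x m)) \<longlonglongrightarrow> d"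
  obtains b where "\<And>m. b m \<in> A" "b \<longlonglongrightarrow> 0" "eventually (\<lambda>m. b m \<noteq> 0) sequentially"
    "(\<lambda>m. norm (x m - b m) / norm (x m)) \<longlonglongrightarrow> 0"
proof -
  obtain b where "\<And>m. b m \<in> A" and close: "(\<lambda>m. norm (x m - b m) / norm (x m)) \<longlonglongrightarrow> 0"
    using assms(1-3,5) unfolding SSP_def by blast
  with relatively_close_tendsto_zero[OF assms(3,4) close] that show ?thesis by blast
qed

locale bilipschitz_near_zero =
  fixes f :: "'a::euclidean_space \<Rightarrow> 'a" and V :: "'a set" and K1 K2 :: real
  assumes open_V: "open V" and zero_in_V: "0 \<in> V" and f_zero: "f 0 = 0" and K1_pos: "0 < K1"
    and bilipschitz: "\<And>x y. x \<in> V \<Longrightarrow> y \<in> V \<Longrightarrow>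
      K1 * dist x y \<le> dist (f x) (f y) \<and> dist (f x) (f y) \<le> K2 * dist x y"
begin

lemma norm_image_ge: "z \<in> V \<Longrightarrow> K1 * norm z \<le> norm (f z)"
  using bilipschitz[OF _ zero_in_V] by (simp add: f_zero)

lemma norm_image_le: "z \<in> V \<Longrightarrow> norm (f z) \<le> K2 * norm z"
  using bilipschitz[OF _ zero_in_V] by (simp add: f_zero)

lemma image_nonzero: "z \<in> V \<Longrightarrow> z \<noteq> 0 \<Longrightarrow> f z \<noteq> 0"
  using norm_image_ge[of z] K1_pos by (auto simp: mult_le_0_iff)

lemma eventually_in_V: "z \<longlonglongrightarrow> 0 \<Longrightarrow> eventually (\<lambda>m. z m \<in> V) sequentially"
  using topological_tendstoD open_V zero_in_V by blast

lemma image_tendsto_zero: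
  assumes "z \<longlonglongrightarrow> 0"
  shows "(\<lambda>m. f (z m)) \<longlonglongrightarrow> 0"
proof (rule Lim_null_comparison)
  show "\<forall>\<^sub>F m in sequentially. norm (f (z m)) \<le> K2 * norm (z m)"
    using eventually_in_V[OF assms] by eventually_elim (rule norm_image_le)
  show "(\<lambda>m. K2 * norm (z m)) \<longlonglongrightarrow> 0"
    using tendsto_mult_right_zero[OF tendsto_norm_zero[OF assms]] .
qed

lemma image_direction_subseq:
  assumes "x \<longlonglongrightarrow> 0" "\<And>m. x m \<noteq> 0"
  obtains r e where "strict_mono r" "e \<in> sphere 0 1"
    "(\<lambda>m. f (x (r m)) /\<^sub>R norm (f (x (r m)))) \<longlonglongrightarrow> e"
proof -
  define u where "u m = f (x m) /\<^sub>R norm (f (x m))" for m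
  have "u m \<in> cball 0 1" for m
    by (cases "f (x m) = 0") (auto simp: u_def)
  then obtain e r where r: "strict_mono r" and ur: "(u \<circ> r) \<longlonglongrightarrow> e"
    using seq_compactE[OF compact_imp_seq_compact[OF compact_cball]] by metis
  have "eventually (\<lambda>m. x (r m) \<in> V) sequentially"
    using eventually_in_V[OF LIMSEQ_subseq_LIMSEQ[OF assms(1) r]] by (simp add: comp_def)
  hence "eventually (\<lambda>m. norm ((u \<circ> r) m) = 1) sequentially"
    by eventually_elim (use image_nonzero assms(2) in \<open>simp add: u_def\<close>)
  hence "(\<lambda>m. 1) \<longlonglongrightarrow> norm e"
    using Lim_transform_eventually[OF tendsto_norm[OF ur]] by simp
  hence "norm e = 1" using LIMSEQ_unique tendsto_const by blast
  hence "e \<in> sphere 0 1" by simp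
  with r ur that show ?thesis by (simp add: u_def comp_def)
qed

lemma image_direction_transfer:
  assumes "eventually (\<lambda>m. x m \<in> V \<and> x m \<noteq> 0 \<and> b m \<in> V \<and> b m \<noteq> 0) sequentially"
    and "(\<lambda>m. norm (x m - b m) / norm (x m)) \<longlonglongrightarrow> 0"
    and "(\<lambda>m. f (x m) /\<^sub>R norm (f (x m))) \<longlonglongrightarrow> e"
  shows "(\<lambda>m. f (b m) /\<^sub>R norm (f (b m))) \<longlonglongrightarrow> e"
proof (rule Lim_transform[OF assms(3)], rule Lim_null_comparison)
  show "(\<lambda>m. (2 * K2 / K1) * (norm (x m - b m) / norm (x m))) \<longlonglongrightarrow> 0"
    using tendsto_mult_right_zero[OF assms(2)] .
  show "\<forall>\<^sub>F m in sequentially. norm (f (b m) /\<^sub>R norm (f (b m)) - f (x m) /\<^sub>R norm (f (x m)))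
      \<le> (2 * K2 / K1) * (norm (x m - b m) / norm (x m))"
    using assms(1)
  proof eventually_elim
    case (elim m)
    then have xV: "x m \<in> V" "x m \<noteq> 0" and bV: "b m \<in> V" "b m \<noteq> 0" by auto
    have close: "norm (f (x m) - f (b m)) \<le> K2 * norm (x m - b m)"
      using bilipschitz[OF xV(1) bV(1)] by (simp add: dist_norm)
    then have "0 \<le> K2 * norm (x m - b m)"
      using norm_ge_zero[of "f (x m) - f (b m)"] by linarith
    have "norm (f (b m) /\<^sub>R norm (f (b m)) - f (x m) /\<^sub>R norm (f (x m)))
        \<le> 2 * norm (f (x m) - f (b m)) / norm (f (x m))"
      using norm_unit_diff_le[OF image_nonzero[OF xV] image_nonzero[OF bV]]
      by (metis norm_minus_commute)
    also have "\<dots> \<le> 2 * (K2 * norm (x m - b m)) / (K1 * norm (x m))"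
    proof (rule frac_le)
      show "0 < K1 * norm (x m)" using K1_pos xV(2) by simp
    qed (use close \<open>0 \<le> K2 * norm (x m - b m)\<close> norm_image_ge[OF xV(1)] in simp_all)
    also have "\<dots> = (2 * K2 / K1) * (norm (x m - b m) / norm (x m))"
      by simp
    finally show ?case .
  qed
qed

lemma common_direction_of_images:
  assumes "SSP A" "d \<in> dirset A" "d \<in> dirset B"
  shows "dirset (f ` (A \<inter> V)) \<inter> dirset (f ` (B \<inter> V)) \<noteq> {}"
proof -
  obtain x where x: "\<And>m. x m \<in> B - {0}" "x \<longlonglongrightarrow> 0" "(\<lambda>m. x m /\<^sub>R norm (x m)) \<longlonglongrightarrow> d"
    using assms(3) unfolding dirset_def by blast
  obtain b where b: "\<And>m. b m \<in> A" "b \<longlonglongrightarrow> 0" "eventually (\<lambda>m. b m \<noteq> 0) sequentially"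
    and close: "(\<lambda>m. norm (x m - b m) / norm (x m)) \<longlonglongrightarrow> 0"
    using SSP_relatively_close[OF assms(1,2) x(2) _ x(3)] x(1) by blast
  obtain r e where r: "strict_mono r" and e: "e \<in> sphere 0 1"
    and fx: "(\<lambda>m. f (x (r m)) /\<^sub>R norm (f (x (r m)))) \<longlonglongrightarrow> e"
    using image_direction_subseq[OF x(2)] x(1) by blast
  have xr: "(\<lambda>m. x (r m)) \<longlonglongrightarrow> 0" and br: "(\<lambda>m. b (r m)) \<longlonglongrightarrow> 0"
    using LIMSEQ_subseq_LIMSEQ[OF x(2) r] LIMSEQ_subseq_LIMSEQ[OF b(2) r] by (simp_all add: comp_def)
  have closer: "(\<lambda>m. norm (x (r m) - b (r m)) / norm (x (r m))) \<longlonglongrightarrow> 0"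
    using LIMSEQ_subseq_LIMSEQ[OF close r] by (simp add: comp_def)
  have "eventually (\<lambda>m. b (r m) \<noteq> 0) sequentially"
    using b(3) eventually_compose_filterlim filterlim_subseq[OF r] by blast
  hence good: "eventually (\<lambda>m. x (r m) \<in> V \<and> x (r m) \<noteq> 0 \<and> b (r m) \<in> V \<and> b (r m) \<noteq> 0) sequentially"
    using eventually_in_V[OF xr] eventually_in_V[OF br] by eventually_elim (use x(1) in blast)
  have "e \<in> dirset (f ` (B \<inter> V))"
  proof (rule dirsetI_eventually[OF _ image_tendsto_zero[OF xr] fx e])
    show "\<forall>\<^sub>F m in sequentially. f (x (r m)) \<in> f ` (B \<inter> V) - {0}"
      using good by eventually_elim (use x(1) image_nonzero in blast)
  qed
  moreover have "e \<in> dirset (f ` (A \<inter> V))"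
  proof (rule dirsetI_eventually[OF _ image_tendsto_zero[OF br] _ e])
    show "\<forall>\<^sub>F m in sequentially. f (b (r m)) \<in> f ` (A \<inter> V) - {0}"
      using good by eventually_elim (use b(1) image_nonzero in blast)
    show "(\<lambda>m. f (b (r m)) /\<^sub>R norm (f (b (r m)))) \<longlonglongrightarrow> e"
      using image_direction_transfer[OF good closer fx] .
  qed
  ultimately show ?thesis by blast
qed

lemma not_weakly_transverse_image:
  assumes "SSP A \<or> SSP B" "\<not> weakly_transverse A B"
  shows "\<not> weakly_transverse (f ` (A \<inter> V)) (f ` (B \<inter> V))"
proof -
  obtain d where "d \<in> dirset A" "d \<in> dirset B"
    using assms(2) unfolding weakly_transverse_def by blast
  then show ?thesis
    using assms(1) common_direction_of_images[of A d B] common_direction_of_images[of B d A]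
    unfolding weakly_transverse_def by blast
qed

end

lemma bilipschitz_homeo_germ_near_zero:
  assumes "bilipschitz_homeo_germ h U"
  obtains K1 K2 g where "bilipschitz_near_zero h U K1 K2"
    "bilipschitz_near_zero g (h ` U) (1 / K2) (1 / K1)" "\<And>x. x \<in> U \<Longrightarrow> g (h x) = x"
proof -
  obtain g K1 K2 where U: "open U" "0 \<in> U" and h0: "h 0 = 0" and hU: "open (h ` U)"
    and hom: "homeomorphism U (h ` U) h g" and K: "0 < K1" "K1 \<le> K2"
    and lip: "\<And>x y. x \<in> U \<Longrightarrow> y \<in> U \<Longrightarrow> K1 * dist x y \<le> dist (h x) (h y) \<and> dist (h x) (h y) \<le> K2 * dist x y"
    using assms unfolding bilipschitz_homeo_germ_def by blast
  have gh: "\<And>x. x \<in> U \<Longrightarrow> g (h x) = x" using hom unfolding homeomorphism_def by blast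
  have "bilipschitz_near_zero h U K1 K2"
    using U h0 K(1) lip by (simp add: bilipschitz_near_zero_def)
  moreover have "bilipschitz_near_zero g (h ` U) (1 / K2) (1 / K1)"
  proof
    show "0 \<in> h ` U" "g 0 = 0" using U(2) h0 gh[of 0] by force+
    show "0 < 1 / K2" using K by simp
    fix x y assume "x \<in> h ` U" "y \<in> h ` U"
    then obtain x' y' where "x' \<in> U" "y' \<in> U" "x = h x'" "y = h y'" by blast
    then show "1 / K2 * dist x y \<le> dist (g x) (g y) \<and> dist (g x) (g y) \<le> 1 / K1 * dist x y"
      using lip[of x' y'] gh K by (simp add: field_simps)
  qed (fact hU)
  ultimately show ?thesis using that gh by blast
qed

theorem theorem3p5:
  fixes A B U :: "'a::euclidean_space set" and h :: "'a \<Rightarrow> 'a"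
  assumes "0 \<in> closure A" and "0 \<in> closure B"
    and "bilipschitz_homeo_germ h U"
    and "SSP A \<or> SSP B"
    and "SSP (h ` (A \<inter> U)) \<or> SSP (h ` (B \<inter> U))"
  shows "weakly_transverse A B \<longleftrightarrow> weakly_transverse (h ` (A \<inter> U)) (h ` (B \<inter> U))"
proof -
  obtain K1 K2 g where h: "bilipschitz_near_zero h U K1 K2"
    and g: "bilipschitz_near_zero g (h ` U) (1 / K2) (1 / K1)" and gh: "\<And>x. x \<in> U \<Longrightarrow> g (h x) = x"
    using bilipschitz_homeo_germ_near_zero[OF assms(3)] by blast
  have g_image: "g ` (h ` (S \<inter> U) \<inter> h ` U) = S \<inter> U" for S
    using gh by force
  show ?thesis
  proof
    assume "weakly_transverse A B"
    then have "weakly_transverse (A \<inter> U) (B \<inter> U)"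
      by (rule weakly_transverse_subset) auto
    then show "weakly_transverse (h ` (A \<inter> U)) (h ` (B \<inter> U))"
      using bilipschitz_near_zero.not_weakly_transverse_image[OF g assms(5)] by (auto simp: g_image)
  qed (use bilipschitz_near_zero.not_weakly_transverse_image[OF h assms(4)] in blast)
qed

end
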